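(* Let $A\in\mathbb{C}^{m\times m}$ and $C\in\mathbb{C}^{n\times n}$ be nonsingular, $B\in\mathbb{C}^{m\times n}$, and $M=ABC$. Then: (e) For each type $\tau\in\{(1),(1,2),(1,4),(1,2,4)\}$ there exists $G\in\{B^{\tau}\}$ with $M^*MC^{-1}GA^{-1}=M^*$. (f) For each type $\tau\in\{(1),(1,2),(1,4),(1,2,4)\}$: $M^*MC^{-1}GA^{-1}=M^*$ holds for all $G\in\{B^{\tau}\}$ if and only if $B=0$ or $r(B)=m$. (g) For each type $\tau\in\{(1,3),(1,2,3),(1,3,4)\}$: $M^*MC^{-1}GA^{-1}=M^*$ holds for all (equivalently, for some) $G\in\{B^{\tau}\}$ if and only if $\mathscr{R}(A^*AB)=\mathscr{R}(B)$; likewise $M^*MC^{-1}B^\dagger A^{-1}=M^*$ if and only if $\mathscr{R}(A^*AB)=\mathscr{R}(B)$. (h) For each type $\tau\in\{(1),(1,2),(1,4),(1,2,4)\}$: $B^*BCHA=B^*$ holds for all $H\in\{M^{\tau}\}$ if and only if $B=0$ or $r(B)=m$. (i) For each type $\tau\in\{(1,3),(1,2,3),(1,3,4)\}$: $B^*BCHA=B^*$ holds for all $H\in\{M^{\tau}\}$ if and only if $\mathscr{R}(A^*AB)=\mathscr{R}(B)$; likewise $B^*BCM^\dagger A=B^*$ if and only if $\mathscr{R}(A^*AB)=\mathscr{R}(B)$.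
   Context: For a complex matrix $X$, $X^*$ is its conjugate transpose, $r(X)$ its rank and $\mathscr{R}(X)$ its column space. For $X\in\mathbb{C}^{p\times q}$, a matrix $G\in\mathbb{C}^{q\times p}$ is called an $\{i,\ldots,j\}$-generalized inverse of $X$ (written $X^{(i,\ldots,j)}$) if it satisfies the equations numbered $i,\ldots,j$ among the four Penrose equations (i) $XGX=X$, (ii) $GXG=G$, (iii) $(XG)^*=XG$, (iv) $(GX)^*=GX$; $\{X^{(i,\ldots,j)}\}$ denotes the set of all such $G$. The Moore–Penrose inverse $X^\dagger$ is the unique matrix satisfying all four equations. *)

theory Defs
  imports Complex_Main "Jordan_Normal_Form.Schur_Decomposition" "Jordan_Normal_Form.DL_Rank"
begin

text \<open>Conjugate transpose: mat_adjoint (Jordan_Normal_Form). Inverse of a nonsingular square matrix.\<close>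

definition minv :: "complex mat \<Rightarrow> complex mat" where
  "minv A = (THE X. X \<in> carrier_mat (dim_row A) (dim_row A) \<and>
                    A * X = 1\<^sub>m (dim_row A) \<and> X * A = 1\<^sub>m (dim_row A))"

definition penrose :: "nat \<Rightarrow> complex mat \<Rightarrow> complex mat \<Rightarrow> bool" where
  "penrose i X G = (if i = 1 then X * G * X = X
                    else if i = 2 then G * X * G = G
                    else if i = 3 then mat_adjoint (X * G) = X * G
                    else if i = 4 then mat_adjoint (G * X) = G * X
                    else True)"

definition ginv_set :: "complex mat \<Rightarrow> nat set \<Rightarrow> complex mat set" where
  "ginv_set X S = {G \<in> carrier_mat (dim_col X) (dim_row X). \<forall>i\<in>S. penrose i X G}"

definition moore_penrose :: "complex mat \<Rightarrow> complex mat" where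
  "moore_penrose X = (THE G. G \<in> ginv_set X {1,2,3,4})"

definition col_range :: "complex mat \<Rightarrow> complex vec set" where
  "col_range X = {X *\<^sub>v v | v. v \<in> carrier_vec (dim_col X)}"

definition mrank :: "complex mat \<Rightarrow> nat" where
  "mrank X = vec_space.rank (dim_row X) X"

end

theory Submission
  imports Defs
begin

(* Cancelling the invertible outer factors of M = A B C turns M^H M C^-1 G A^-1 = M^H into the
   weighted normal equation B^H K B G = B^H K with K = A^H A, and B^H B C H A = B^H into
   M^H K' M H = M^H K' with K' = (A^-1)^H A^-1.  So everything is a statement about
   X^H K X G = X^H K for a weight K = T^H T with T invertible.

   If G satisfies (1) and (3), then X G is the orthogonal projector onto R(X) and, after taking
   adjoints, the equation says that this projector fixes K X, i.e. R(K X) is contained in R(X);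
   as K is hermitian and invertible, the projector then commutes with K, which yields equality.
   Without (3) the equation is solved by the {1,2,4}-inverse (T X)^+ T.  It holds for all
   {1,2,4}-inverses only if X = 0 or X has full row rank: otherwise E = I - X X^+ is nonzero
   with E X = 0, and the {1,2,4}-inverses X^+ + X^+ X W E for arbitrary W would force
   X^H K X W E = 0 for every W, although X^H K X is nonzero. *)

section \<open>Matrix algebra\<close>

notation mat_adjoint (\<open>(_\<^sup>H)\<close> [1000])

lemma dim_row_mat_adjoint [simp]: "dim_row (A\<^sup>H) = dim_col A"
  and dim_col_mat_adjoint [simp]: "dim_col (A\<^sup>H) = dim_row A"
  unfolding mat_adjoint_def by (simp_all add: mat_of_rows_def)

lemma index_mat_adjoint [simp]:
  fixes A :: "complex mat"
  shows "i < dim_col A \<Longrightarrow> j < dim_row A \<Longrightarrow> A\<^sup>H $$ (i, j) = cnj (A $$ (j, i))"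
  unfolding mat_adjoint_def by (subst mat_of_rows_index) simp_all

lemma mat_adjoint_carrier_mat [simp]: "A \<in> carrier_mat p q \<Longrightarrow> A\<^sup>H \<in> carrier_mat q p"
  by (intro carrier_matI) auto

lemma mat_adjoint_adjoint [simp]: "(A\<^sup>H)\<^sup>H = (A :: complex mat)"
  by (rule eq_matI) auto

lemma mat_adjoint_one [simp]: "(1\<^sub>m n)\<^sup>H = (1\<^sub>m n :: complex mat)"
  by (rule eq_matI) auto

lemma mat_adjoint_zero [simp]: "(0\<^sub>m p q)\<^sup>H = (0\<^sub>m q p :: complex mat)"
  by (rule eq_matI) auto

lemma mat_adjoint_mult:
  fixes A B :: "complex mat"
  assumes "dim_col A = dim_row B"
  shows "(A * B)\<^sup>H = B\<^sup>H * A\<^sup>H"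
proof (rule eq_matI)
  fix i j assume ij: "i < dim_row (B\<^sup>H * A\<^sup>H)" "j < dim_col (B\<^sup>H * A\<^sup>H)"
  have "(A * B)\<^sup>H $$ (i, j) = cnj (\<Sum>k<dim_col A. A $$ (j, k) * B $$ (k, i))"
    using assms ij by (auto simp: scalar_prod_def atLeast0LessThan)
  also have "\<dots> = (\<Sum>k<dim_col A. cnj (B $$ (k, i)) * cnj (A $$ (j, k)))"
    by (simp add: mult.commute)
  also have "\<dots> = (B\<^sup>H * A\<^sup>H) $$ (i, j)"
    using assms ij by (auto simp: scalar_prod_def atLeast0LessThan)
  finally show "(A * B)\<^sup>H $$ (i, j) = (B\<^sup>H * A\<^sup>H) $$ (i, j)" .
qed (use assms in auto)

(* The diagonal entries of X^H X are the squared norms of the columns of X. *)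
lemma mat_adjoint_mult_self_eq_zero_iff:
  fixes X :: "complex mat"
  assumes X: "X \<in> carrier_mat p q"
  shows "X\<^sup>H * X = 0\<^sub>m q q \<longleftrightarrow> X = 0\<^sub>m p q"
proof
  assume Z: "X\<^sup>H * X = 0\<^sub>m q q"
  show "X = 0\<^sub>m p q"
  proof (rule eq_matI)
    fix i j assume i: "i < dim_row (0\<^sub>m p q :: complex mat)" and j: "j < dim_col (0\<^sub>m p q :: complex mat)"
    have "of_real (\<Sum>k<p. (cmod (X $$ (k, j)))\<^sup>2) = (X\<^sup>H * X) $$ (j, j)"
      using X i j unfolding of_real_sum
      by (auto simp: scalar_prod_def atLeast0LessThan complex_mult_cnj mult.commute cmod_power2
          intro!: sum.cong)
    also have "\<dots> = 0" using Z j by simp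
    finally have "(\<Sum>k<p. (cmod (X $$ (k, j)))\<^sup>2) = 0" by (simp only: of_real_eq_0_iff)
    then have "(cmod (X $$ (i, j)))\<^sup>2 = 0"
      using sum_nonneg_eq_0_iff[of "{..<p}" "\<lambda>k. (cmod (X $$ (k, j)))\<^sup>2"] i by auto
    then show "X $$ (i, j) = 0\<^sub>m p q $$ (i, j)" using i j by auto
  qed (use X in auto)
qed (use X in simp)

lemma assoc_mult_mat_dims:
  fixes A B C :: "'a :: semiring_0 mat"
  assumes "dim_col A = dim_row B" "dim_col B = dim_row C"
  shows "A * B * C = A * (B * C)"
  using assms by (intro assoc_mult_mat[of A "dim_row A" "dim_col A" B "dim_col B" C "dim_col C"])
    (auto intro: carrier_matI)

lemmas mat_assoc_simps = assoc_mult_mat_dims mat_adjoint_mult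

lemma minus_mat_eq_zero_iff:
  fixes A B :: "'a :: ab_group_add mat"
  assumes "A \<in> carrier_mat p q" "B \<in> carrier_mat p q"
  shows "A - B = 0\<^sub>m p q \<longleftrightarrow> A = B"
proof
  assume "A - B = 0\<^sub>m p q"
  then have "(A - B) $$ (i, j) = 0" if "i < p" "j < q" for i j using that by simp
  then show "A = B" using assms by (intro eq_matI) auto
qed (use assms in simp)

lemma add_mat_eq_left_iff:
  fixes A B :: "'a :: ab_group_add mat"
  assumes "A \<in> carrier_mat p q" "B \<in> carrier_mat p q"
  shows "A + B = A \<longleftrightarrow> B = 0\<^sub>m p q"
proof
  assume e: "A + B = A"
  show "B = 0\<^sub>m p q"
  proof (rule eq_matI)
    fix i j assume "i < dim_row (0\<^sub>m p q :: 'a mat)" "j < dim_col (0\<^sub>m p q :: 'a mat)"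
    then have "(A + B) $$ (i, j) = A $$ (i, j) + B $$ (i, j)" using assms by simp
    then show "B $$ (i, j) = 0\<^sub>m p q $$ (i, j)" using e \<open>i < _\<close> \<open>j < _\<close> by simp
  qed (use assms in auto)
qed (use assms in simp)

lemma exists_mult_mult_neq_zero_mat:
  fixes A B :: "'a :: idom mat"
  assumes A: "A \<in> carrier_mat a b" and B: "B \<in> carrier_mat c d"
    and nA: "A \<noteq> 0\<^sub>m a b" and nB: "B \<noteq> 0\<^sub>m c d"
  shows "\<exists>W \<in> carrier_mat b c. A * W * B \<noteq> 0\<^sub>m a d"
proof -
  obtain i k where i: "i < a" and k: "k < b" and Aik: "A $$ (i, k) \<noteq> 0"
    using nA A by (metis carrier_matD eq_matI index_zero_mat)
  obtain l j where l: "l < c" and j: "j < d" and Blj: "B $$ (l, j) \<noteq> 0"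
    using nB B by (metis carrier_matD eq_matI index_zero_mat)
  define W :: "'a mat" where "W = mat b c (\<lambda>(x, y). if x = k \<and> y = l then 1 else 0)"
  have W: "W \<in> carrier_mat b c" unfolding W_def by simp
  have AW: "(A * W) $$ (i, y) = (if y = l then A $$ (i, k) else 0)" if y: "y < c" for y
  proof -
    have "(A * W) $$ (i, y) = (\<Sum>x\<in>{0..<b}. A $$ (i, x) * (if x = k \<and> y = l then 1 else 0))"
      using A W i y by (simp add: scalar_prod_def W_def)
    also have "\<dots> = (\<Sum>x\<in>{0..<b}. if x = k then (if y = l then A $$ (i, k) else 0) else 0)"
      by (rule sum.cong) auto
    finally show ?thesis using k by simp
  qed
  have "(A * W * B) $$ (i, j) = (\<Sum>y\<in>{0..<c}. (A * W) $$ (i, y) * B $$ (y, j))"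
    using A W B i j by (simp add: scalar_prod_def del: assoc_mult_mat)
  also have "\<dots> = (\<Sum>y\<in>{0..<c}. if y = l then A $$ (i, k) * B $$ (l, j) else 0)"
    by (rule sum.cong) (auto simp: AW)
  also have "\<dots> = A $$ (i, k) * B $$ (l, j)" using l by simp
  finally have "(A * W * B) $$ (i, j) \<noteq> 0" using Aik Blj by simp
  then show ?thesis using W i j by (intro bexI[of _ W]) auto
qed

lemma invertible_mat_iff_inverse:
  fixes A :: "complex mat"
  assumes A: "A \<in> carrier_mat n n"
  shows "invertible_mat A \<longleftrightarrow> (\<exists>B \<in> carrier_mat n n. A * B = 1\<^sub>m n \<and> B * A = 1\<^sub>m n)"
proof
  assume "invertible_mat A"
  then obtain B where AB: "A * B = 1\<^sub>m (dim_row A)" and BA: "B * A = 1\<^sub>m (dim_row B)"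
    unfolding invertible_mat_def inverts_mat_def by blast
  have "dim_col B = n" using arg_cong[OF AB, of dim_col] A by auto
  moreover have "dim_row B = n" using arg_cong[OF BA, of dim_col] A by auto
  ultimately show "\<exists>B \<in> carrier_mat n n. A * B = 1\<^sub>m n \<and> B * A = 1\<^sub>m n"
    using AB BA A by (intro bexI[of _ B]) (auto intro: carrier_matI)
qed (use A in \<open>auto simp: invertible_mat_def inverts_mat_def\<close>)

lemma minv_inverse:
  fixes A :: "complex mat"
  assumes A: "A \<in> carrier_mat n n" and inv: "invertible_mat A"
  shows "minv A \<in> carrier_mat n n" "A * minv A = 1\<^sub>m n" "minv A * A = 1\<^sub>m n"
proof -
  obtain B where B: "B \<in> carrier_mat n n" "A * B = 1\<^sub>m n" "B * A = 1\<^sub>m n"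
    using inv invertible_mat_iff_inverse[OF A] by blast
  have uniq: "X = B" if X: "X \<in> carrier_mat n n" "A * X = 1\<^sub>m n" "X * A = 1\<^sub>m n" for X
  proof -
    have "X = X * (A * B)" using X B by simp
    also have "\<dots> = (X * A) * B" by (rule assoc_mult_mat[symmetric, OF X(1) A B(1)])
    also have "\<dots> = B" unfolding X(3) using B by simp
    finally show ?thesis .
  qed
  have "minv A = B" unfolding minv_def using A B by (intro the_equality) (auto intro: uniq)
  then show "minv A \<in> carrier_mat n n" "A * minv A = 1\<^sub>m n" "minv A * A = 1\<^sub>m n" using B by auto
qed

lemma invertible_mat_minv:
  fixes A :: "complex mat"
  assumes "A \<in> carrier_mat n n" "invertible_mat A"
  shows "invertible_mat (minv A)"
  using minv_inverse[OF assms] by (subst invertible_mat_iff_inverse) (auto intro!: bexI[of _ A] assms)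

lemma invertible_mat_adjoint:
  fixes A :: "complex mat"
  assumes A: "A \<in> carrier_mat n n" and inv: "invertible_mat A"
  shows "invertible_mat (A\<^sup>H)"
proof -
  note Ai = minv_inverse[OF A inv]
  have "A\<^sup>H * (minv A)\<^sup>H = 1\<^sub>m n" "(minv A)\<^sup>H * A\<^sup>H = 1\<^sub>m n"
    using Ai A by (simp_all flip: mat_adjoint_mult)
  then show ?thesis using A Ai(1) by (subst invertible_mat_iff_inverse) auto
qed

lemma invertible_mat_mult:
  fixes A B :: "complex mat"
  assumes A: "A \<in> carrier_mat n n" "invertible_mat A" and B: "B \<in> carrier_mat n n" "invertible_mat B"
  shows "invertible_mat (A * B)"
proof -
  note Ai = minv_inverse[OF A] and Bi = minv_inverse[OF B]
  have "A * B * (minv B * minv A) = A * (B * minv B) * minv A"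
    using A B Ai(1) Bi(1) by (simp add: mat_assoc_simps)
  also have "\<dots> = 1\<^sub>m n" using A Ai Bi by simp
  finally have AB: "A * B * (minv B * minv A) = 1\<^sub>m n" .
  have "minv B * minv A * (A * B) = minv B * (minv A * A) * B"
    using A B Ai(1) Bi(1) by (simp add: mat_assoc_simps)
  also have "\<dots> = 1\<^sub>m n" using B Ai Bi by simp
  finally have BA: "minv B * minv A * (A * B) = 1\<^sub>m n" .
  show ?thesis
    unfolding invertible_mat_iff_inverse[OF mult_carrier_mat[OF A(1) B(1)]]
    using AB BA Ai(1) Bi(1) by (intro bexI[of _ "minv B * minv A"]) auto
qed

lemma mult_invertible_cancel:
  fixes U V Y Z :: "complex mat"
  assumes U: "U \<in> carrier_mat a a" "invertible_mat U" and V: "V \<in> carrier_mat b b" "invertible_mat V"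
    and Y: "Y \<in> carrier_mat a b" and Z: "Z \<in> carrier_mat a b"
  shows "U * Y * V = U * Z * V \<longleftrightarrow> Y = Z"
proof
  note Ui = minv_inverse[OF U] and Vi = minv_inverse[OF V]
  have cancel: "minv U * (U * W * V) * minv V = W" if W: "W \<in> carrier_mat a b" for W
  proof -
    have "minv U * (U * W * V) * minv V = (minv U * U) * W * (V * minv V)"
      using U(1) V(1) Ui(1) Vi(1) W by (simp add: mat_assoc_simps)
    also have "\<dots> = W" using Ui(3) Vi(2) W by simp
    finally show ?thesis .
  qed
  assume "U * Y * V = U * Z * V"
  then show "Y = Z" using cancel[OF Y] cancel[OF Z] by metis
qed simp

lemma mult_invertible_eq_zero_iff:
  fixes U V Y :: "complex mat"
  assumes U: "U \<in> carrier_mat a a" "invertible_mat U" and V: "V \<in> carrier_mat b b" "invertible_mat V"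
    and Y: "Y \<in> carrier_mat a b"
  shows "U * Y * V = 0\<^sub>m a b \<longleftrightarrow> Y = 0\<^sub>m a b"
  using mult_invertible_cancel[OF U V Y zero_carrier_mat] U V by simp

lemma right_inverse_mult_invertible_iff:
  fixes U V Y :: "complex mat"
  assumes U: "U \<in> carrier_mat a a" "invertible_mat U" and V: "V \<in> carrier_mat b b" "invertible_mat V"
    and Y: "Y \<in> carrier_mat a b"
  shows "(\<exists>R \<in> carrier_mat b a. U * Y * V * R = 1\<^sub>m a)
    \<longleftrightarrow> (\<exists>R \<in> carrier_mat b a. Y * R = 1\<^sub>m a)"
proof
  note Ui = minv_inverse[OF U]
  assume "\<exists>R \<in> carrier_mat b a. U * Y * V * R = 1\<^sub>m a"
  then obtain R where R: "R \<in> carrier_mat b a" and e: "U * Y * V * R = 1\<^sub>m a" by blast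
  have "minv U * (U * Y * V * R) * U = (minv U * U) * Y * (V * R * U)"
    using U V Ui(1) Y R by (simp add: mat_assoc_simps)
  then have "Y * (V * R * U) = 1\<^sub>m a" using e U Ui Y V R by simp
  then show "\<exists>R \<in> carrier_mat b a. Y * R = 1\<^sub>m a" using U V R by (intro bexI[of _ "V * R * U"]) auto
next
  note Ui = minv_inverse[OF U] and Vi = minv_inverse[OF V]
  assume "\<exists>R \<in> carrier_mat b a. Y * R = 1\<^sub>m a"
  then obtain R where R: "R \<in> carrier_mat b a" and e: "Y * R = 1\<^sub>m a" by blast
  have "U * Y * V * (minv V * R * minv U) = U * (Y * (V * minv V) * R) * minv U"
    using U V Vi(1) Ui(1) Y R by (simp add: mat_assoc_simps)
  also have "\<dots> = 1\<^sub>m a" using U Vi Ui Y R e by simp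
  finally show "\<exists>R \<in> carrier_mat b a. U * Y * V * R = 1\<^sub>m a"
    using Ui Vi R by (intro bexI[of _ "minv V * R * minv U"]) auto
qed

section \<open>Generalized inverses\<close>

lemma mem_ginv_set:
  "G \<in> ginv_set X S \<longleftrightarrow> G \<in> carrier_mat (dim_col X) (dim_row X) \<and> (\<forall>i\<in>S. penrose i X G)"
  unfolding ginv_set_def by blast

(* The variant with Suc 0 is needed because simp normalises the numeral 1 :: nat to Suc 0. *)
lemma penrose_simps [simp]:
  "penrose 1 X G \<longleftrightarrow> X * G * X = X" "penrose (Suc 0) X G \<longleftrightarrow> X * G * X = X"
  "penrose 2 X G \<longleftrightarrow> G * X * G = G"
  "penrose 3 X G \<longleftrightarrow> (X * G)\<^sup>H = X * G" "penrose 4 X G \<longleftrightarrow> (G * X)\<^sup>H = G * X"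
  unfolding penrose_def by simp_all

lemma ginv_set_carrier_mat: "G \<in> ginv_set X S \<Longrightarrow> X \<in> carrier_mat p q \<Longrightarrow> G \<in> carrier_mat q p"
  unfolding ginv_set_def by auto

lemma ginv_set_antimono: "S \<subseteq> S' \<Longrightarrow> ginv_set X S' \<subseteq> ginv_set X S"
  unfolding ginv_set_def by blast

lemma row_echelon_form_ginv1_exists:
  fixes C :: "'a :: field mat"
  assumes C: "C \<in> carrier_mat p q" and ref: "row_echelon_form C"
  shows "\<exists>G \<in> carrier_mat q p. C * G * C = C"
proof -
  obtain f where "pivot_fun C f q" using ref C unfolding row_echelon_form_def by auto
  note pivot = pivot_funD[OF carrier_matD(1)[OF C] this]
  define G :: "'a mat" where "G = mat q p (\<lambda>(j, i). if f i < q \<and> j = f i then 1 else 0)"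
  have G: "G \<in> carrier_mat q p" unfolding G_def by simp
  have CG: "C * G = mat p p (\<lambda>(i, i'). if i = i' \<and> f i < q then 1 else 0)"
  proof (rule eq_matI)
    fix i i' assume "i < dim_row (mat p p (\<lambda>(i, i'). if i = i' \<and> f i < q then 1 else (0 :: 'a)))"
      and "i' < dim_col (mat p p (\<lambda>(i, i'). if i = i' \<and> f i < q then 1 else (0 :: 'a)))"
    then have i: "i < p" and i': "i' < p" by auto
    have "(C * G) $$ (i, i') = (\<Sum>j\<in>{0..<q}. C $$ (i, j) * (if f i' < q \<and> j = f i' then 1 else 0))"
      using C G i i' by (simp add: scalar_prod_def G_def)
    also have "\<dots> = (\<Sum>j\<in>{0..<q}. if j = f i' then (if f i' < q then C $$ (i, f i') else 0) else 0)"
      by (rule sum.cong) auto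
    also have "\<dots> = (if i = i' \<and> f i < q then 1 else 0)"
      using pivot(4)[OF i'] pivot(5)[OF i' _ i] by (auto simp: sum.delta)
    finally show "(C * G) $$ (i, i') = mat p p (\<lambda>(i, i'). if i = i' \<and> f i < q then 1 else 0) $$ (i, i')"
      using i i' by simp
  qed (use C G in auto)
  have "C * G * C = C"
  proof (rule eq_matI)
    fix i k assume "i < dim_row C" and "k < dim_col C"
    then have i: "i < p" and k: "k < q" using C by auto
    have "(C * G * C) $$ (i, k) = (\<Sum>i'\<in>{0..<p}. (if i = i' \<and> f i < q then 1 else 0) * C $$ (i', k))"
      unfolding CG using C i k by (simp add: scalar_prod_def)
    also have "\<dots> = (\<Sum>i'\<in>{0..<p}. if i' = i then (if f i < q then C $$ (i, k) else 0) else 0)"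
      by (rule sum.cong) auto
    also have "\<dots> = C $$ (i, k)"
      using i k pivot(1)[OF i] pivot(2)[OF i, of k] by (cases "f i < q") auto
    finally show "(C * G * C) $$ (i, k) = C $$ (i, k)" .
  qed (use C G in auto)
  then show ?thesis using G by blast
qed

lemma ginv1_exists:
  fixes X :: "'a :: field mat"
  assumes X: "X \<in> carrier_mat p q"
  shows "\<exists>G \<in> carrier_mat q p. X * G * X = X"
proof -
  define C where "C = gauss_jordan_single X"
  note gj = gauss_jordan_single[OF X C_def[symmetric]]
  from gj(4) obtain P Q where P: "P \<in> carrier_mat p p" and Q: "Q \<in> carrier_mat p p"
    and CPX: "C = P * X" and QP: "Q * P = 1\<^sub>m p" by blast
  obtain G where G: "G \<in> carrier_mat q p" and CGC: "C * G * C = C"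
    using row_echelon_form_ginv1_exists[OF gj(2,3)] by blast
  have "X = Q * P * X" using QP X by simp
  also have "\<dots> = Q * C" unfolding CPX using Q P X by simp
  finally have XQC: "X = Q * C" .
  have "X * (G * P) * X = X * G * (P * X)" using X G P by (simp add: mat_assoc_simps)
  also have "\<dots> = Q * (C * G * C)"
    unfolding CPX[symmetric] using Q G gj(2) by (subst XQC) (simp add: mat_assoc_simps)
  also have "\<dots> = X" using CGC XQC by simp
  finally show ?thesis using G P by (intro bexI[of _ "G * P"]) auto
qed

lemma ginv1_normal_cancel:
  fixes X H :: "complex mat"
  assumes X: "X \<in> carrier_mat p q" and H: "H \<in> carrier_mat q q"
    and g1: "X\<^sup>H * X * H * (X\<^sup>H * X) = X\<^sup>H * X"
  shows "X * H * (X\<^sup>H * X) = X"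
proof -
  define N where "N = X\<^sup>H * X"
  have N: "N \<in> carrier_mat q q" unfolding N_def using X by (intro carrier_matI) auto
  define W where "W = H * N - 1\<^sub>m q"
  have W: "W \<in> carrier_mat q q" unfolding W_def using H N by (intro carrier_matI) auto
  have "X\<^sup>H * (X * W) = N * W" unfolding N_def using X W by (simp add: mat_assoc_simps)
  also have "\<dots> = N * H * N - N"
    unfolding W_def using N H by (simp add: mult_minus_distrib_mat[of _ q q _ q])
  also have "\<dots> = 0\<^sub>m q q" using g1 N unfolding N_def[symmetric] by simp
  finally have "X\<^sup>H * (X * W) = 0\<^sub>m q q" .
  then have "(X * W)\<^sup>H * (X * W) = 0\<^sub>m q q"
    using X W by (simp add: mat_assoc_simps)
  then have "X * W = 0\<^sub>m p q"
    using X W mat_adjoint_mult_self_eq_zero_iff[of "X * W" p q] by simp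
  moreover have "X * W = X * H * N - X"
    unfolding W_def using X H N by (simp add: mult_minus_distrib_mat[of _ p q _ q])
  ultimately show ?thesis
    using X H N minus_mat_eq_zero_iff[of "X * H * N" p q X] by (simp add: N_def)
qed

lemma ginv13_exists:
  fixes X :: "complex mat"
  assumes X: "X \<in> carrier_mat p q"
  shows "\<exists>Y \<in> carrier_mat q p. X * Y * X = X \<and> (X * Y)\<^sup>H = X * Y"
proof -
  define N where "N = X\<^sup>H * X"
  have N: "N \<in> carrier_mat q q" and hN: "N\<^sup>H = N"
    unfolding N_def using X by (auto simp: mat_adjoint_mult intro: carrier_matI)
  obtain H where H: "H \<in> carrier_mat q q" and g1: "N * H * N = N"
    using ginv1_exists[OF N] by blast
  \<comment> \<open>As N is hermitian, H^H is a {1}-inverse of N as well; this makes X Y hermitian.\<close>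
  have "(N * H * N)\<^sup>H = N * H\<^sup>H * N" using N H hN by (simp add: mat_assoc_simps)
  then have g1': "N * H\<^sup>H * N = N" using g1 hN by simp
  have XHN: "X * H * N = X" using ginv1_normal_cancel[OF X H g1[unfolded N_def]] unfolding N_def .
  have XHN': "X * H\<^sup>H * N = X"
    using ginv1_normal_cancel[OF X _ g1'[unfolded N_def]] H unfolding N_def by simp
  have "(X * H\<^sup>H * N)\<^sup>H = N * H * X\<^sup>H" using X H N hN by (simp add: mat_assoc_simps)
  then have NHX: "N * H * X\<^sup>H = X\<^sup>H" using XHN' by simp
  define Y where "Y = H * X\<^sup>H"
  have Y: "Y \<in> carrier_mat q p" unfolding Y_def using H X by simp
  have "X * Y * X = X * H * N" unfolding Y_def N_def using X H by (simp add: mat_assoc_simps)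
  then have 1: "X * Y * X = X" using XHN by simp
  have "(X * Y)\<^sup>H = X * H\<^sup>H * (N * H * X\<^sup>H)"
    unfolding Y_def using X H N by (simp add: NHX mat_assoc_simps)
  also have "\<dots> = (X * H\<^sup>H * N) * H * X\<^sup>H" using X H N by (simp add: mat_assoc_simps)
  also have "\<dots> = X * Y" unfolding XHN' Y_def using X H by (simp add: mat_assoc_simps)
  finally show ?thesis using 1 Y by blast
qed

lemma ginv14_exists:
  fixes X :: "complex mat"
  assumes X: "X \<in> carrier_mat p q"
  shows "\<exists>Z \<in> carrier_mat q p. X * Z * X = X \<and> (Z * X)\<^sup>H = Z * X"
proof -
  obtain Y where Y: "Y \<in> carrier_mat p q" and 1: "X\<^sup>H * Y * X\<^sup>H = X\<^sup>H"
    and 3: "(X\<^sup>H * Y)\<^sup>H = X\<^sup>H * Y" using ginv13_exists[OF mat_adjoint_carrier_mat[OF X]] by auto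
  have "X * Y\<^sup>H * X = (X\<^sup>H * Y * X\<^sup>H)\<^sup>H" using X Y by (simp add: mat_assoc_simps)
  moreover have "Y\<^sup>H * X = (X\<^sup>H * Y)\<^sup>H" using X Y by (simp add: mat_assoc_simps)
  ultimately show ?thesis using Y 1 3 by (intro bexI[of _ "Y\<^sup>H"]) auto
qed

lemma moore_penrose_exists:
  fixes X :: "complex mat"
  assumes X: "X \<in> carrier_mat p q"
  shows "\<exists>G. G \<in> ginv_set X {1,2,3,4}"
proof -
  obtain Y where Y: "Y \<in> carrier_mat q p" and y1: "X * Y * X = X" and y3: "(X * Y)\<^sup>H = X * Y"
    using ginv13_exists[OF X] by blast
  obtain Z where Z: "Z \<in> carrier_mat q p" and z1: "X * Z * X = X" and z4: "(Z * X)\<^sup>H = Z * X"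
    using ginv14_exists[OF X] by blast
  define G where "G = Z * X * Y"
  have G: "G \<in> carrier_mat q p" unfolding G_def using X Y Z by simp
  have "X * G = X * Z * X * Y" unfolding G_def using X Y Z by (simp add: mat_assoc_simps)
  then have XG: "X * G = X * Y" unfolding z1 .
  have "G * X = Z * (X * Y * X)" unfolding G_def using X Y Z by (simp add: mat_assoc_simps)
  then have GX: "G * X = Z * X" unfolding y1 .
  have "G * X * G = Z * (X * G)" unfolding GX using X Z G by (simp add: mat_assoc_simps)
  also have "\<dots> = Z * (X * Y)" unfolding XG ..
  also have "\<dots> = G" unfolding G_def using X Y Z by (simp add: mat_assoc_simps)
  finally have "G * X * G = G" .
  moreover have "X * G * X = X" unfolding XG y1 ..
  ultimately show ?thesis using G X y3 z4 by (intro exI[of _ G]) (simp add: mem_ginv_set XG GX)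
qed

lemma moore_penrose_unique:
  fixes X :: "complex mat"
  assumes X: "X \<in> carrier_mat p q"
    and G1: "G1 \<in> ginv_set X {1,2,3,4}" and G2: "G2 \<in> ginv_set X {1,2,3,4}"
  shows "G1 = G2"
proof -
  have c1: "G1 \<in> carrier_mat q p" and a1: "X * G1 * X = X" and b1: "G1 * X * G1 = G1"
    and h1: "(X * G1)\<^sup>H = X * G1" and k1: "(G1 * X)\<^sup>H = G1 * X"
    using G1 X by (auto simp: mem_ginv_set)
  have c2: "G2 \<in> carrier_mat q p" and a2: "X * G2 * X = X" and b2: "G2 * X * G2 = G2"
    and h2: "(X * G2)\<^sup>H = X * G2" and k2: "(G2 * X)\<^sup>H = G2 * X"
    using G2 X by (auto simp: mem_ginv_set)
  have "G1 = G1 * (X * G1)\<^sup>H" unfolding h1 using b1 X c1 by (simp add: mat_assoc_simps)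
  also have "\<dots> = G1 * (X * G2 * X * G1)\<^sup>H" unfolding a2 ..
  also have "\<dots> = G1 * (X * G1)\<^sup>H * (X * G2)\<^sup>H" using X c1 c2 by (simp add: mat_assoc_simps)
  also have "\<dots> = G1 * X * G1 * X * G2" unfolding h1 h2 using X c1 c2 by (simp add: mat_assoc_simps)
  finally have e1: "G1 = G1 * X * G2" unfolding b1 .
  have "G2 = (G2 * X)\<^sup>H * G2" unfolding k2 using b2 X c2 by (simp add: mat_assoc_simps)
  also have "\<dots> = (X * G1 * X)\<^sup>H * G2\<^sup>H * G2" unfolding a1 using X c2 by (simp add: mat_assoc_simps)
  also have "\<dots> = (G1 * X)\<^sup>H * (G2 * X)\<^sup>H * G2" using X c1 c2 by (simp add: mat_assoc_simps)
  also have "\<dots> = G1 * X * (G2 * X * G2)" unfolding k1 k2 using X c1 c2 by (simp add: mat_assoc_simps)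
  finally show ?thesis using e1 unfolding b2 by simp
qed

lemma moore_penrose_ginv_set:
  fixes X :: "complex mat"
  assumes X: "X \<in> carrier_mat p q" and S: "S \<subseteq> {1,2,3,4}"
  shows "moore_penrose X \<in> ginv_set X S"
proof -
  obtain G where G: "G \<in> ginv_set X {1,2,3,4}" using moore_penrose_exists[OF X] by blast
  have "moore_penrose X \<in> ginv_set X {1,2,3,4}"
    unfolding moore_penrose_def
    by (rule theI[where P = "\<lambda>G. G \<in> ginv_set X {1,2,3,4}", OF G moore_penrose_unique[OF X _ G]])
  then show ?thesis using ginv_set_antimono[OF S] by blast
qed

section \<open>Column space and rank\<close>

lemma col_range_subset_iff:
  fixes X Y :: "complex mat"
  assumes X: "X \<in> carrier_mat p q" and Y: "Y \<in> carrier_mat p r"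
  shows "col_range X \<subseteq> col_range Y \<longleftrightarrow> (\<exists>Z \<in> carrier_mat r q. X = Y * Z)"
proof
  assume sub: "col_range X \<subseteq> col_range Y"
  have "\<exists>w. w \<in> carrier_vec r \<and> Y *\<^sub>v w = col X j" if j: "j < q" for j
  proof -
    have "X *\<^sub>v unit_vec q j = col X j" using X j by (intro eq_vecI) auto
    moreover have "X *\<^sub>v unit_vec q j \<in> col_range X" using X unfolding col_range_def by auto
    then have "X *\<^sub>v unit_vec q j \<in> col_range Y" using sub by auto
    ultimately show ?thesis unfolding col_range_def using Y by auto
  qed
  then obtain c where c: "\<And>j. j < q \<Longrightarrow> c j \<in> carrier_vec r \<and> Y *\<^sub>v c j = col X j"
    by metis
  define Z where "Z = mat r q (\<lambda>(k, j). c j $ k)"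
  have Z: "Z \<in> carrier_mat r q" unfolding Z_def by simp
  have colZ: "col Z j = c j" if "j < q" for j
    unfolding Z_def using that c[OF that] by (intro eq_vecI) auto
  have "X = Y * Z"
  proof (rule eq_matI)
    fix i j assume "i < dim_row (Y * Z)" and "j < dim_col (Y * Z)"
    then have i: "i < p" and j: "j < q" using Y Z by auto
    have "(Y * Z) $$ (i, j) = (Y *\<^sub>v col Z j) $ i" using Y Z i j by simp
    then show "X $$ (i, j) = (Y * Z) $$ (i, j)" using X i j colZ[OF j] c[OF j] by simp
  qed (use X Y Z in auto)
  then show "\<exists>Z \<in> carrier_mat r q. X = Y * Z" using Z by blast
next
  assume "\<exists>Z \<in> carrier_mat r q. X = Y * Z"
  then obtain Z where Z: "Z \<in> carrier_mat r q" and XYZ: "X = Y * Z" by blast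
  show "col_range X \<subseteq> col_range Y"
  proof
    fix y assume "y \<in> col_range X"
    then obtain v where v: "v \<in> carrier_vec q" and y: "y = X *\<^sub>v v"
      using X unfolding col_range_def by auto
    have "y = Y *\<^sub>v (Z *\<^sub>v v)" unfolding y XYZ using Y Z v by (simp add: assoc_mult_mat_vec)
    then show "y \<in> col_range Y" unfolding col_range_def using Y Z v by auto
  qed
qed

lemma ginv1_mult_eq_iff_col_range_subset:
  fixes X G Y :: "complex mat"
  assumes X: "X \<in> carrier_mat p q" and G: "G \<in> carrier_mat q p" and g1: "X * G * X = X"
    and Y: "Y \<in> carrier_mat p r"
  shows "X * G * Y = Y \<longleftrightarrow> col_range Y \<subseteq> col_range X"
  unfolding col_range_subset_iff[OF Y X]
proof
  assume "X * G * Y = Y"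
  then have "Y = X * (G * Y)" using X G Y by simp
  then show "\<exists>Z \<in> carrier_mat q r. Y = X * Z" using G Y by (intro bexI[of _ "G * Y"]) auto
next
  assume "\<exists>Z \<in> carrier_mat q r. Y = X * Z"
  then obtain Z where Z: "Z \<in> carrier_mat q r" and "Y = X * Z" by blast
  then show "X * G * Y = Y"
    using assoc_mult_mat[OF mult_carrier_mat[OF X G] X Z] unfolding g1 by simp
qed

lemma col_range_mult_invertible_subset_iff:
  fixes U V Y Z :: "complex mat"
  assumes U: "U \<in> carrier_mat a a" "invertible_mat U" and V: "V \<in> carrier_mat b b" "invertible_mat V"
    and Y: "Y \<in> carrier_mat a b" and Z: "Z \<in> carrier_mat a b"
  shows "col_range (U * Y * V) \<subseteq> col_range (U * Z * V) \<longleftrightarrow> col_range Y \<subseteq> col_range Z"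
proof -
  note Vi = minv_inverse[OF V]
  have "(\<exists>W \<in> carrier_mat b b. U * Y * V = U * Z * V * W) \<longleftrightarrow> (\<exists>W \<in> carrier_mat b b. Y = Z * W)"
  proof
    assume "\<exists>W \<in> carrier_mat b b. U * Y * V = U * Z * V * W"
    then obtain W where W: "W \<in> carrier_mat b b" and e: "U * Y * V = U * Z * V * W" by blast
    have "U * Z * V * W = U * (Z * (V * W * minv V)) * V"
      using U V Vi W Z by (simp add: mat_assoc_simps)
    then have "Y = Z * (V * W * minv V)"
      using e mult_invertible_cancel[OF U V Y, of "Z * (V * W * minv V)"] V Vi(1) W Z by simp
    then show "\<exists>W \<in> carrier_mat b b. Y = Z * W" using V Vi(1) W by (intro bexI[of _ "V * W * minv V"]) auto
  next
    assume "\<exists>W \<in> carrier_mat b b. Y = Z * W"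
    then obtain W where W: "W \<in> carrier_mat b b" and e: "Y = Z * W" by blast
    have "U * Y * V = U * Z * (V * minv V) * W * V" using U V Vi W Z by (simp add: e)
    also have "\<dots> = U * Z * V * (minv V * W * V)" using U V Vi(1) W Z by (simp add: mat_assoc_simps)
    finally show "\<exists>W \<in> carrier_mat b b. U * Y * V = U * Z * V * W"
      using V Vi(1) W by (intro bexI[of _ "minv V * W * V"]) auto
  qed
  then show ?thesis
    using col_range_subset_iff[OF Y Z] col_range_subset_iff[of "U * Y * V" a b "U * Z * V" b] U V Y Z by simp
qed

lemma (in vec_space) rank_eq_dim_iff_col_space:
  assumes X: "X \<in> carrier_mat n nc"
  shows "rank X = n \<longleftrightarrow> col_space X = carrier_vec n"
proof -
  let ?S = "set (cols X)"
  have S: "?S \<subseteq> carrier_vec n" using X cols_dim[of X] by auto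
  have sub: "VectorSpace.subspace class_ring (span ?S) V" using span_is_subspace[OF S] .
  have W: "vectorspace class_ring (vs (span ?S))" using subspace_is_vs[OF sub] .
  have fW: "vectorspace.fin_dim class_ring (vs (span ?S))" using fin_dim_span[of ?S] S by simp
  show ?thesis unfolding col_space_def
  proof
    assume r: "rank X = n"
    obtain b where fb: "finite b" and bb: "vectorspace.basis class_ring (vs (span ?S)) b"
      using vectorspace.finite_basis_exists[OF W fW] by blast
    have cb: "card b = n" using vectorspace.dim_basis[OF W fb bb] r unfolding rank_def by simp
    have bS: "b \<subseteq> span ?S" and lib: "LinearCombinations.module.lin_indpt class_ring (vs (span ?S)) b"
      using bb unfolding vectorspace.basis_def[OF W] by auto
    have smod: "submodule class_ring (span ?S) V" using sub unfolding VectorSpace.subspace_def by auto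
    have li: "lin_indpt b" using lib span_li_not_depend(2)[OF bS smod] by simp
    have bV: "b \<subseteq> carrier_vec n" using bS span_is_subset2[OF S] by auto
    have "basis b" by (rule dim_li_is_basis[OF fin_dim fb bV li]) (simp add: cb dim_is_n)
    then have "span b = carrier V" unfolding basis_def by auto
    moreover have "span b \<subseteq> span ?S" using span_is_subset[OF bS smod] .
    ultimately show "span ?S = carrier_vec n" using span_is_subset2[OF S] by auto
  next
    assume "span ?S = carrier_vec n"
    then have "vs (span ?S) = V" by simp
    then show "rank X = n" unfolding rank_def using dim_is_n by simp
  qed
qed

lemma mrank_eq_dim_row_iff_right_inverse:
  fixes X :: "complex mat"
  assumes X: "X \<in> carrier_mat m n"
  shows "mrank X = m \<longleftrightarrow> (\<exists>R \<in> carrier_mat n m. X * R = 1\<^sub>m m)"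
proof -
  interpret V: vec_space "TYPE(complex)" m .
  have "mrank X = m \<longleftrightarrow> V.col_space X = carrier_vec m"
    unfolding mrank_def using V.rank_eq_dim_iff_col_space[OF X] X by simp
  also have "V.col_space X = col_range X"
    using V.col_space_eq[OF X] X unfolding col_range_def by auto
  also have "col_range (1\<^sub>m m) = carrier_vec m"
    unfolding col_range_def by (auto intro!: exI[of _ "x" for x])
  then have "col_range X = carrier_vec m \<longleftrightarrow> col_range (1\<^sub>m m) \<subseteq> col_range X"
    using X unfolding col_range_def by auto
  also have "\<dots> \<longleftrightarrow> (\<exists>R \<in> carrier_mat n m. X * R = 1\<^sub>m m)"
    using col_range_subset_iff[OF one_carrier_mat X] by (simp add: eq_commute[of "1\<^sub>m m"])
  finally show ?thesis .
qed

lemma mrank_mult_invertible_eq_dim_row_iff: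
  fixes U V Y :: "complex mat"
  assumes U: "U \<in> carrier_mat a a" "invertible_mat U" and V: "V \<in> carrier_mat b b" "invertible_mat V"
    and Y: "Y \<in> carrier_mat a b"
  shows "mrank (U * Y * V) = a \<longleftrightarrow> mrank Y = a"
proof -
  have UYV: "U * Y * V \<in> carrier_mat a b" using U V Y by simp
  show ?thesis
    unfolding mrank_eq_dim_row_iff_right_inverse[OF UYV] mrank_eq_dim_row_iff_right_inverse[OF Y]
    by (rule right_inverse_mult_invertible_iff[OF U V Y])
qed

section \<open>The weighted normal equation\<close>

lemma ginv124_weighted_normal_eq_exists:
  fixes X T :: "complex mat"
  assumes X: "X \<in> carrier_mat p q" and T: "T \<in> carrier_mat p p" "invertible_mat T"
  shows "\<exists>G \<in> ginv_set X {1,2,4}. X\<^sup>H * (T\<^sup>H * T) * X * G = X\<^sup>H * (T\<^sup>H * T)"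
proof -
  define N where "N = T * X"
  have N: "N \<in> carrier_mat p q" unfolding N_def using T X by simp
  define D where "D = moore_penrose N"
  have "D \<in> ginv_set N {1,2,3,4}" unfolding D_def by (rule moore_penrose_ginv_set[OF N]) simp
  then have D: "D \<in> carrier_mat q p" and d1: "N * D * N = N" and d2: "D * N * D = D"
    and d3: "(N * D)\<^sup>H = N * D" and d4: "(D * N)\<^sup>H = D * N"
    using N by (auto simp: mem_ginv_set)
  note Ti = minv_inverse[OF T]
  have "minv T * N = minv T * T * X" unfolding N_def using T(1) Ti(1) X by (simp add: mat_assoc_simps)
  then have XN: "X = minv T * N" using Ti(3) X by simp
  have "X * (D * T) * X = X * D * N" unfolding N_def using X D T by (simp add: mat_assoc_simps)
  also have "\<dots> = minv T * (N * D * N)" using Ti(1) D N by (subst XN) (simp add: mat_assoc_simps)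
  also have "\<dots> = X" unfolding d1 using XN by simp
  finally have 1: "X * (D * T) * X = X" .
  have "D * T * X * (D * T) = D * N * D * T" unfolding N_def using X D T by (simp add: mat_assoc_simps)
  then have 2: "D * T * X * (D * T) = D * T" unfolding d2 .
  have DTX: "D * T * X = D * N" unfolding N_def using X D T by (simp add: mat_assoc_simps)
  have "X\<^sup>H * (T\<^sup>H * T) * X * (D * T) = N\<^sup>H * (N * D) * T"
    unfolding N_def using X D T by (simp add: mat_assoc_simps)
  also have "\<dots> = N\<^sup>H * (N * D)\<^sup>H * T" unfolding d3 ..
  also have "\<dots> = (N * D * N)\<^sup>H * T" using N D by (simp add: mat_assoc_simps)
  also have "\<dots> = X\<^sup>H * (T\<^sup>H * T)" unfolding d1 unfolding N_def using X T by (simp add: mat_assoc_simps)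
  finally show ?thesis using 1 2 d4 X D T by (intro bexI[of _ "D * T"]) (auto simp: mem_ginv_set DTX)
qed

lemma ginv124_add_perturbation:
  fixes X G E W :: "complex mat"
  assumes X: "X \<in> carrier_mat p q" and G: "G \<in> ginv_set X {1,2,4}"
    and E: "E \<in> carrier_mat p p" and EX: "E * X = 0\<^sub>m p q" and W: "W \<in> carrier_mat q p"
  shows "G + G * X * W * E \<in> ginv_set X {1,2,4}"
proof -
  have Gc: "G \<in> carrier_mat q p" and g1: "X * G * X = X" and g2: "G * X * G = G"
    and g4: "(G * X)\<^sup>H = G * X"
    using G X by (auto simp: mem_ginv_set)
  define Y where "Y = G * X * W * E"
  have Y: "Y \<in> carrier_mat q p" unfolding Y_def using Gc X W E by (intro carrier_matI) auto
  have "Y * X = G * X * W * (E * X)" unfolding Y_def using Gc X W E by (simp add: mat_assoc_simps)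
  then have YX: "Y * X = 0\<^sub>m q q" unfolding EX using Gc X W by simp
  have GYX: "(G + Y) * X = G * X" using Gc Y X YX by (simp add: add_mult_distrib_mat)
  have "X * (G + Y) * X = X * G * X" using X Gc Y GYX by (simp add: mat_assoc_simps)
  then have 1: "X * (G + Y) * X = X" unfolding g1 .
  have "G * X * Y = G * X * G * X * W * E" unfolding Y_def using Gc X W E by (simp add: mat_assoc_simps)
  then have GXY: "G * X * Y = Y" unfolding g2 Y_def .
  have "(G + Y) * X * (G + Y) = G * X * G + G * X * Y"
    unfolding GYX by (rule mult_add_distrib_mat[OF mult_carrier_mat[OF Gc X] Gc Y])
  then have 2: "(G + Y) * X * (G + Y) = G + Y" unfolding g2 GXY .
  show ?thesis using 1 2 g4 X Gc Y unfolding Y_def[symmetric] by (simp add: mem_ginv_set GYX)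
qed

lemma weighted_gram_eq_zero_iff:
  fixes X T :: "complex mat"
  assumes X: "X \<in> carrier_mat p q" and T: "T \<in> carrier_mat p p" "invertible_mat T"
  shows "X\<^sup>H * (T\<^sup>H * T) * X = 0\<^sub>m q q \<longleftrightarrow> X = 0\<^sub>m p q"
proof -
  have "X\<^sup>H * (T\<^sup>H * T) * X = (T * X)\<^sup>H * (T * X)" using X T by (simp add: mat_assoc_simps)
  moreover have "T * X = 0\<^sub>m p q \<longleftrightarrow> X = 0\<^sub>m p q"
  proof
    assume "T * X = 0\<^sub>m p q"
    then have "minv T * T * X = 0\<^sub>m p q" using minv_inverse(1)[OF T] T X by (simp add: mat_assoc_simps)
    then show "X = 0\<^sub>m p q" using minv_inverse(3)[OF T] X by simp
  qed (use T in simp)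
  ultimately show ?thesis using X T mat_adjoint_mult_self_eq_zero_iff[of "T * X" p q] by simp
qed

lemma right_inverse_if_all_ginv124_weighted_normal_eq:
  fixes X T :: "complex mat"
  assumes X: "X \<in> carrier_mat p q" and T: "T \<in> carrier_mat p p" "invertible_mat T"
    and nX: "X \<noteq> 0\<^sub>m p q"
    and all: "\<forall>G \<in> ginv_set X {1,2,4}. X\<^sup>H * (T\<^sup>H * T) * X * G = X\<^sup>H * (T\<^sup>H * T)"
  shows "\<exists>R \<in> carrier_mat q p. X * R = 1\<^sub>m p"
proof (rule ccontr)
  assume nR: "\<not> (\<exists>R \<in> carrier_mat q p. X * R = 1\<^sub>m p)"
  define D where "D = moore_penrose X"
  have DS: "D \<in> ginv_set X {1,2,4}" unfolding D_def by (rule moore_penrose_ginv_set[OF X]) auto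
  then have D: "D \<in> carrier_mat q p" and d1: "X * D * X = X" using X by (auto simp: mem_ginv_set)
  define E where "E = 1\<^sub>m p - X * D"
  have E: "E \<in> carrier_mat p p" unfolding E_def using X D by (intro carrier_matI) auto
  have "E * X = X - X * D * X" unfolding E_def using X D by (simp add: minus_mult_distrib_mat[of _ p p])
  then have EX: "E * X = 0\<^sub>m p q" unfolding d1 using X by simp
  have nE: "E \<noteq> 0\<^sub>m p p"
    using nR D X minus_mat_eq_zero_iff[of "1\<^sub>m p" p p "X * D"] unfolding E_def by auto
  define N where "N = X\<^sup>H * (T\<^sup>H * T) * X"
  have N: "N \<in> carrier_mat q q" unfolding N_def using X T by (intro carrier_matI) auto
  have nN: "N \<noteq> 0\<^sub>m q q" unfolding N_def using weighted_gram_eq_zero_iff[OF X T] nX by simp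
  have "N * W * E = 0\<^sub>m q p" if W: "W \<in> carrier_mat q p" for W
  proof -
    have "N * (D + D * X * W * E) = N * D" "N * D = X\<^sup>H * (T\<^sup>H * T)"
      using all DS ginv124_add_perturbation[OF X DS E EX W] unfolding N_def by auto
    moreover have "N * (D + D * X * W * E) = N * D + N * W * E"
    proof -
      have "N * (D * X * W * E) = X\<^sup>H * (T\<^sup>H * T) * (X * D * X) * W * E"
        unfolding N_def using X T D W E by (simp add: mat_assoc_simps)
      also have "\<dots> = N * W * E" unfolding d1 N_def ..
      finally have e: "N * (D * X * W * E) = N * W * E" .
      have "D * X * W * E \<in> carrier_mat q p" using D X W E by (intro carrier_matI) auto
      then show ?thesis unfolding e[symmetric] by (rule mult_add_distrib_mat[OF N D])
    qed
    ultimately have "N * D + N * W * E = N * D" by metis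
    moreover have "N * D \<in> carrier_mat q p" "N * W * E \<in> carrier_mat q p" using N D W E by auto
    ultimately show ?thesis using add_mat_eq_left_iff by blast
  qed
  then show False using exists_mult_mult_neq_zero_mat[OF N E nN nE] by blast
qed

lemma all_ginv_weighted_normal_eq_iff:
  fixes X T :: "complex mat"
  assumes X: "X \<in> carrier_mat p q" and T: "T \<in> carrier_mat p p" "invertible_mat T"
    and S: "1 \<in> S" "S \<subseteq> {1,2,4}"
  shows "(\<forall>G \<in> ginv_set X S. X\<^sup>H * (T\<^sup>H * T) * X * G = X\<^sup>H * (T\<^sup>H * T))
    \<longleftrightarrow> X = 0\<^sub>m p q \<or> mrank X = p"
proof
  assume "\<forall>G \<in> ginv_set X S. X\<^sup>H * (T\<^sup>H * T) * X * G = X\<^sup>H * (T\<^sup>H * T)"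
  then have "\<forall>G \<in> ginv_set X {1,2,4}. X\<^sup>H * (T\<^sup>H * T) * X * G = X\<^sup>H * (T\<^sup>H * T)"
    using ginv_set_antimono[OF S(2)] by blast
  then show "X = 0\<^sub>m p q \<or> mrank X = p"
    using right_inverse_if_all_ginv124_weighted_normal_eq[OF X T]
      mrank_eq_dim_row_iff_right_inverse[OF X] by blast
next
  assume rank: "X = 0\<^sub>m p q \<or> mrank X = p"
  show "\<forall>G \<in> ginv_set X S. X\<^sup>H * (T\<^sup>H * T) * X * G = X\<^sup>H * (T\<^sup>H * T)"
  proof
    fix G assume "G \<in> ginv_set X S"
    then have G: "G \<in> carrier_mat q p" and g1: "X * G * X = X" using S(1) X by (auto simp: mem_ginv_set)
    show "X\<^sup>H * (T\<^sup>H * T) * X * G = X\<^sup>H * (T\<^sup>H * T)"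
    proof (cases "X = 0\<^sub>m p q")
      case True
      then show ?thesis using G T by simp
    next
      case False
      then obtain R where R: "R \<in> carrier_mat q p" and XR: "X * R = 1\<^sub>m p"
        using rank mrank_eq_dim_row_iff_right_inverse[OF X] by auto
      have "X * G = X * G * X * R" using X G R by (simp add: XR mat_assoc_simps)
      then have "X * G = 1\<^sub>m p" unfolding g1 XR .
      then show ?thesis using X G T by (simp add: mat_assoc_simps)
    qed
  qed
qed

lemma hermitian_commute_if_eq_sandwich:
  fixes K P :: "complex mat"
  assumes K: "K \<in> carrier_mat p p" "K\<^sup>H = K" and P: "P \<in> carrier_mat p p" "P\<^sup>H = P"
    and KP: "K * P = P * K * P"
  shows "P * K = K * P"
proof -
  have "P * K = (K * P)\<^sup>H" using K P by (simp add: mat_adjoint_mult)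
  also have "\<dots> = (P * K * P)\<^sup>H" unfolding KP ..
  also have "\<dots> = P * K * P" using K P by (simp add: mat_assoc_simps)
  finally show ?thesis using KP by simp
qed

(* P = X G is hermitian and fixes K X; then K P = P K P, so P commutes with K and with K^-1,
   and X = P X = K X (G K^-1 X). *)
lemma col_range_hermitian_mult_eq_if_subset:
  fixes X G K :: "complex mat"
  assumes X: "X \<in> carrier_mat p q" and G: "G \<in> carrier_mat q p"
    and g1: "X * G * X = X" and g3: "(X * G)\<^sup>H = X * G"
    and K: "K \<in> carrier_mat p p" "invertible_mat K" "K\<^sup>H = K"
    and sub: "col_range (K * X) \<subseteq> col_range X"
  shows "col_range (K * X) = col_range X"
proof -
  define P where "P = X * G"
  have P: "P \<in> carrier_mat p p" unfolding P_def using X G by simp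
  note Ki = minv_inverse[OF K(1,2)]
  have PKX: "P * (K * X) = K * X"
    unfolding P_def using ginv1_mult_eq_iff_col_range_subset[OF X G g1 mult_carrier_mat[OF K(1) X]] sub by simp
  have "K * P = P * (K * X) * G" unfolding PKX unfolding P_def using K X G by (simp add: mat_assoc_simps)
  also have "\<dots> = P * K * P" unfolding P_def using K X G by (simp add: mat_assoc_simps)
  finally have PK: "P * K = K * P"
    by (intro hermitian_commute_if_eq_sandwich[OF K(1,3) P]) (simp add: P_def g3)
  have "minv K * P = minv K * (P * K) * minv K" using Ki P K by (simp add: mat_assoc_simps)
  also have "\<dots> = (minv K * K) * P * minv K" unfolding PK using Ki(1) P K by (simp add: mat_assoc_simps)
  also have "\<dots> = P * minv K" using Ki(1,3) P by simp
  finally have KiP: "minv K * P = P * minv K" .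
  have "X = K * minv K * (P * X)" unfolding P_def g1 using K Ki X by simp
  also have "\<dots> = K * (minv K * P) * X" using K Ki(1) P X by (simp add: mat_assoc_simps)
  also have "\<dots> = K * X * (G * minv K * X)" unfolding KiP unfolding P_def using K Ki(1) X G by (simp add: mat_assoc_simps)
  finally have "X = K * X * (G * minv K * X)" .
  moreover have "G * minv K * X \<in> carrier_mat q q" using G Ki(1) X by simp
  ultimately have "col_range X \<subseteq> col_range (K * X)"
    unfolding col_range_subset_iff[OF X mult_carrier_mat[OF K(1) X]] by blast
  then show ?thesis using sub by blast
qed

lemma ginv13_hermitian_normal_eq_iff:
  fixes X G K :: "complex mat"
  assumes X: "X \<in> carrier_mat p q" and G: "G \<in> carrier_mat q p"
    and g1: "X * G * X = X" and g3: "(X * G)\<^sup>H = X * G"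
    and K: "K \<in> carrier_mat p p" "invertible_mat K" "K\<^sup>H = K"
  shows "X\<^sup>H * K * X * G = X\<^sup>H * K \<longleftrightarrow> col_range (K * X) = col_range X"
proof -
  have "(X\<^sup>H * K * X * G)\<^sup>H = (X * G)\<^sup>H * (K * X)" and "(X\<^sup>H * K)\<^sup>H = K * X"
    using X G K by (simp_all add: mat_assoc_simps)
  then have "X\<^sup>H * K * X * G = X\<^sup>H * K \<longleftrightarrow> X * G * (K * X) = K * X"
    unfolding g3 by (metis mat_adjoint_adjoint)
  also have "\<dots> \<longleftrightarrow> col_range (K * X) \<subseteq> col_range X"
    by (rule ginv1_mult_eq_iff_col_range_subset[OF X G g1 mult_carrier_mat[OF K(1) X]])
  also have "\<dots> \<longleftrightarrow> col_range (K * X) = col_range X"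
    using col_range_hermitian_mult_eq_if_subset[OF X G g1 g3 K] by blast
  finally show ?thesis .
qed

lemma adjoint_mult_self_hermitian_invertible:
  fixes T :: "complex mat"
  assumes T: "T \<in> carrier_mat p p" "invertible_mat T"
  shows "T\<^sup>H * T \<in> carrier_mat p p" "invertible_mat (T\<^sup>H * T)" "(T\<^sup>H * T)\<^sup>H = T\<^sup>H * T"
proof -
  have TH: "T\<^sup>H \<in> carrier_mat p p" "invertible_mat (T\<^sup>H)" using T by (simp_all add: invertible_mat_adjoint)
  show "T\<^sup>H * T \<in> carrier_mat p p" "invertible_mat (T\<^sup>H * T)" "(T\<^sup>H * T)\<^sup>H = T\<^sup>H * T"
    using mult_carrier_mat[OF TH(1) T(1)] invertible_mat_mult[OF TH T] T by (simp_all add: mat_adjoint_mult)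
qed

theorem ginv_weighted_normal_equation:
  fixes X T :: "complex mat"
  assumes X: "X \<in> carrier_mat p q" and T: "T \<in> carrier_mat p p" "invertible_mat T"
  defines "solves G \<equiv> X\<^sup>H * (T\<^sup>H * T) * X * G = X\<^sup>H * (T\<^sup>H * T)"
  shows "\<forall>\<tau> \<in> {{1}, {1,2}, {1,4}, {1,2,4}}. \<exists>G \<in> ginv_set X \<tau>. solves G"
    and "\<forall>\<tau> \<in> {{1}, {1,2}, {1,4}, {1,2,4}}.
      (\<forall>G \<in> ginv_set X \<tau>. solves G) \<longleftrightarrow> X = 0\<^sub>m p q \<or> mrank X = p"
    and "\<forall>\<tau> \<in> {{1,3}, {1,2,3}, {1,3,4}}.
      ((\<forall>G \<in> ginv_set X \<tau>. solves G) \<longleftrightarrow> col_range (T\<^sup>H * T * X) = col_range X)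
    \<and> ((\<exists>G \<in> ginv_set X \<tau>. solves G) \<longleftrightarrow> col_range (T\<^sup>H * T * X) = col_range X)"
    and "solves (moore_penrose X) \<longleftrightarrow> col_range (T\<^sup>H * T * X) = col_range X"
proof -
  have ginv13: "solves G \<longleftrightarrow> col_range (T\<^sup>H * T * X) = col_range X"
    if "G \<in> ginv_set X \<tau>" "{1,3} \<subseteq> \<tau>" for G \<tau>
  proof -
    have G: "G \<in> carrier_mat q p" and g1: "X * G * X = X" and g3: "(X * G)\<^sup>H = X * G"
      using that X by (auto simp: mem_ginv_set)
    show ?thesis unfolding solves_def
      by (rule ginv13_hermitian_normal_eq_iff[OF X G g1 g3 adjoint_mult_self_hermitian_invertible[OF T]])
  qed
  have "\<exists>G \<in> ginv_set X \<tau>. solves G" if "\<tau> \<subseteq> {1,2,4}" for \<tau>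
    using ginv124_weighted_normal_eq_exists[OF X T] ginv_set_antimono[OF that] unfolding solves_def by blast
  then show "\<forall>\<tau> \<in> {{1}, {1,2}, {1,4}, {1,2,4}}. \<exists>G \<in> ginv_set X \<tau>. solves G" by simp
  show "\<forall>\<tau> \<in> {{1}, {1,2}, {1,4}, {1,2,4}}.
      (\<forall>G \<in> ginv_set X \<tau>. solves G) \<longleftrightarrow> X = 0\<^sub>m p q \<or> mrank X = p"
    using all_ginv_weighted_normal_eq_iff[OF X T] unfolding solves_def by simp
  have "((\<forall>G \<in> ginv_set X \<tau>. solves G) \<longleftrightarrow> col_range (T\<^sup>H * T * X) = col_range X)
    \<and> ((\<exists>G \<in> ginv_set X \<tau>. solves G) \<longleftrightarrow> col_range (T\<^sup>H * T * X) = col_range X)"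
    if "{1,3} \<subseteq> \<tau>" "\<tau> \<subseteq> {1,2,3,4}" for \<tau>
    using ginv13[OF _ that(1)] moore_penrose_ginv_set[OF X that(2)] by blast
  then show "\<forall>\<tau> \<in> {{1,3}, {1,2,3}, {1,3,4}}.
      ((\<forall>G \<in> ginv_set X \<tau>. solves G) \<longleftrightarrow> col_range (T\<^sup>H * T * X) = col_range X)
    \<and> ((\<exists>G \<in> ginv_set X \<tau>. solves G) \<longleftrightarrow> col_range (T\<^sup>H * T * X) = col_range X)" by simp
  show "solves (moore_penrose X) \<longleftrightarrow> col_range (T\<^sup>H * T * X) = col_range X"
    using ginv13[OF moore_penrose_ginv_set[OF X order_refl]] by simp
qed

section \<open>Reduction of the equations for A B C\<close>

lemma col_range_mult_invertible_eq_iff: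
  fixes U V Y Z :: "complex mat"
  assumes U: "U \<in> carrier_mat a a" "invertible_mat U" and V: "V \<in> carrier_mat b b" "invertible_mat V"
    and Y: "Y \<in> carrier_mat a b" and Z: "Z \<in> carrier_mat a b"
  shows "col_range (U * Y * V) = col_range (U * Z * V) \<longleftrightarrow> col_range Y = col_range Z"
  using col_range_mult_invertible_subset_iff[OF U V Y Z] col_range_mult_invertible_subset_iff[OF U V Z Y]
  by blast

lemma product_ginv_eq_iff_weighted_normal_eq:
  fixes A B C G :: "complex mat"
  assumes A: "A \<in> carrier_mat m m" "invertible_mat A" and C: "C \<in> carrier_mat n n" "invertible_mat C"
    and B: "B \<in> carrier_mat m n" and G: "G \<in> carrier_mat n m"
  shows "(A * B * C)\<^sup>H * (A * B * C) * minv C * G * minv A = (A * B * C)\<^sup>H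
    \<longleftrightarrow> B\<^sup>H * (A\<^sup>H * A) * B * G = B\<^sup>H * (A\<^sup>H * A)"
proof -
  note Ai = minv_inverse[OF A] and Ci = minv_inverse[OF C]
  have "(A * B * C)\<^sup>H * (A * B * C) * minv C * G * minv A
      = C\<^sup>H * (B\<^sup>H * (A\<^sup>H * A) * B * (C * minv C) * G) * minv A"
    using A B C Ai(1) Ci(1) G by (simp add: mat_assoc_simps)
  also have "\<dots> = C\<^sup>H * (B\<^sup>H * (A\<^sup>H * A) * B * G) * minv A"
    unfolding Ci(2) using A B G by simp
  finally have lhs: "(A * B * C)\<^sup>H * (A * B * C) * minv C * G * minv A
      = C\<^sup>H * (B\<^sup>H * (A\<^sup>H * A) * B * G) * minv A" .
  have "C\<^sup>H * (B\<^sup>H * (A\<^sup>H * A)) * minv A = (A * B * C)\<^sup>H * (A * minv A)"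
    using A B C Ai(1) by (simp add: mat_assoc_simps)
  then have rhs: "(A * B * C)\<^sup>H = C\<^sup>H * (B\<^sup>H * (A\<^sup>H * A)) * minv A"
    unfolding Ai(2) using A B C by simp
  show ?thesis unfolding lhs unfolding rhs
    by (rule mult_invertible_cancel[OF mat_adjoint_carrier_mat[OF C(1)] invertible_mat_adjoint[OF C]
          Ai(1) invertible_mat_minv[OF A]]) (use A B G in auto)
qed

lemma factor_ginv_eq_iff_weighted_normal_eq:
  fixes A B C H :: "complex mat"
  assumes A: "A \<in> carrier_mat m m" "invertible_mat A" and C: "C \<in> carrier_mat n n" "invertible_mat C"
    and B: "B \<in> carrier_mat m n" and H: "H \<in> carrier_mat n m"
  shows "B\<^sup>H * B * C * H * A = B\<^sup>H \<longleftrightarrow>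
    (A * B * C)\<^sup>H * ((minv A)\<^sup>H * minv A) * (A * B * C) * H = (A * B * C)\<^sup>H * ((minv A)\<^sup>H * minv A)"
proof -
  note Ai = minv_inverse[OF A]
  have "(A * B * C)\<^sup>H * ((minv A)\<^sup>H * minv A) * (A * B * C) * H
      = C\<^sup>H * B\<^sup>H * (minv A * A)\<^sup>H * (minv A * A) * B * C * H"
    using A B C Ai(1) H by (simp add: mat_assoc_simps)
  also have "\<dots> = C\<^sup>H * (B\<^sup>H * B * C * H * A) * minv A"
    unfolding Ai(3) using A B C Ai(1,2) H by (simp add: mat_assoc_simps)
  finally have lhs: "(A * B * C)\<^sup>H * ((minv A)\<^sup>H * minv A) * (A * B * C) * H
      = C\<^sup>H * (B\<^sup>H * B * C * H * A) * minv A" .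
  have "(A * B * C)\<^sup>H * ((minv A)\<^sup>H * minv A) = C\<^sup>H * B\<^sup>H * (minv A * A)\<^sup>H * minv A"
    using A B C Ai(1) by (simp add: mat_assoc_simps)
  then have rhs: "(A * B * C)\<^sup>H * ((minv A)\<^sup>H * minv A) = C\<^sup>H * B\<^sup>H * minv A"
    unfolding Ai(3) using B C Ai(1) by simp
  show ?thesis unfolding lhs unfolding rhs
    by (rule mult_invertible_cancel[OF mat_adjoint_carrier_mat[OF C(1)] invertible_mat_adjoint[OF C]
          Ai(1) invertible_mat_minv[OF A], symmetric]) (use A B C H in auto)
qed

lemma col_range_weighted_mult_invertible_iff:
  fixes A B C :: "complex mat"
  assumes A: "A \<in> carrier_mat m m" "invertible_mat A" and C: "C \<in> carrier_mat n n" "invertible_mat C"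
    and B: "B \<in> carrier_mat m n"
  shows "col_range ((minv A)\<^sup>H * minv A * (A * B * C)) = col_range (A * B * C)
    \<longleftrightarrow> col_range (A\<^sup>H * A * B) = col_range B"
proof -
  note Ai = minv_inverse[OF A]
  have "(minv A)\<^sup>H * minv A * (A * B * C) = (minv A)\<^sup>H * (minv A * A) * B * C"
    using A B C Ai(1) by (simp add: mat_assoc_simps)
  then have left: "(minv A)\<^sup>H * minv A * (A * B * C) = (minv A)\<^sup>H * B * C"
    unfolding Ai(3) using Ai(1) B by simp
  have "(minv A)\<^sup>H * (A\<^sup>H * A * B) * C = (A * minv A)\<^sup>H * A * B * C"
    using A B C Ai(1) by (simp add: mat_assoc_simps)
  then have right: "A * B * C = (minv A)\<^sup>H * (A\<^sup>H * A * B) * C"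
    unfolding Ai(2) using A B C by simp
  have "A\<^sup>H * A * B \<in> carrier_mat m n" using A B by (intro carrier_matI) auto
  from col_range_mult_invertible_eq_iff[OF mat_adjoint_carrier_mat[OF Ai(1)]
        invertible_mat_adjoint[OF Ai(1) invertible_mat_minv[OF A]] C B this]
  show ?thesis unfolding left unfolding right by metis
qed

theorem lemma4p1:
  fixes A B C M :: "complex mat" and m n :: nat
  assumes A: "A \<in> carrier_mat m m" and invA: "invertible_mat A"
      and C: "C \<in> carrier_mat n n" and invC: "invertible_mat C"
      and B: "B \<in> carrier_mat m n"
      and M: "M = A * B * C"
  shows
   "(\<forall>\<tau> \<in> {{1}, {1,2}, {1,4}, {1,2,4::nat}}.
      \<exists>G \<in> ginv_set B \<tau>. mat_adjoint M * M * minv C * G * minv A = mat_adjoint M)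
  \<and> (\<forall>\<tau> \<in> {{1}, {1,2}, {1,4}, {1,2,4::nat}}.
      (\<forall>G \<in> ginv_set B \<tau>. mat_adjoint M * M * minv C * G * minv A = mat_adjoint M)
        \<longleftrightarrow> (B = 0\<^sub>m m n \<or> mrank B = m))
  \<and> (\<forall>\<tau> \<in> {{1,3}, {1,2,3}, {1,3,4::nat}}.
      ((\<forall>G \<in> ginv_set B \<tau>. mat_adjoint M * M * minv C * G * minv A = mat_adjoint M)
        \<longleftrightarrow> col_range (mat_adjoint A * A * B) = col_range B)
    \<and> ((\<exists>G \<in> ginv_set B \<tau>. mat_adjoint M * M * minv C * G * minv A = mat_adjoint M)
        \<longleftrightarrow> col_range (mat_adjoint A * A * B) = col_range B))
  \<and> ((mat_adjoint M * M * minv C * moore_penrose B * minv A = mat_adjoint M)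
        \<longleftrightarrow> col_range (mat_adjoint A * A * B) = col_range B)
  \<and> (\<forall>\<tau> \<in> {{1}, {1,2}, {1,4}, {1,2,4::nat}}.
      (\<forall>H \<in> ginv_set M \<tau>. mat_adjoint B * B * C * H * A = mat_adjoint B)
        \<longleftrightarrow> (B = 0\<^sub>m m n \<or> mrank B = m))
  \<and> (\<forall>\<tau> \<in> {{1,3}, {1,2,3}, {1,3,4::nat}}.
      (\<forall>H \<in> ginv_set M \<tau>. mat_adjoint B * B * C * H * A = mat_adjoint B)
        \<longleftrightarrow> col_range (mat_adjoint A * A * B) = col_range B)
  \<and> ((mat_adjoint B * B * C * moore_penrose M * A = mat_adjoint B)
        \<longleftrightarrow> col_range (mat_adjoint A * A * B) = col_range B)"
proof -
  note Ai = minv_inverse[OF A invA] and invAi = invertible_mat_minv[OF A invA]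
  have Mc: "M \<in> carrier_mat m n" unfolding M using A B C by simp
  have eqB: "M\<^sup>H * M * minv C * G * minv A = M\<^sup>H \<longleftrightarrow> B\<^sup>H * (A\<^sup>H * A) * B * G = B\<^sup>H * (A\<^sup>H * A)"
    if "G \<in> ginv_set B \<tau>" for G \<tau>
    using product_ginv_eq_iff_weighted_normal_eq[OF A invA C invC B ginv_set_carrier_mat[OF that B]]
    unfolding M .
  have eqM: "B\<^sup>H * B * C * H * A = B\<^sup>H \<longleftrightarrow>
      M\<^sup>H * ((minv A)\<^sup>H * minv A) * M * H = M\<^sup>H * ((minv A)\<^sup>H * minv A)" if "H \<in> ginv_set M \<tau>" for H \<tau>
    using factor_ginv_eq_iff_weighted_normal_eq[OF A invA C invC B ginv_set_carrier_mat[OF that Mc]]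
    unfolding M .
  have rank: "(M = 0\<^sub>m m n \<or> mrank M = m) \<longleftrightarrow> (B = 0\<^sub>m m n \<or> mrank B = m)"
    unfolding M by (simp only: mult_invertible_eq_zero_iff[OF A invA C invC B]
        mrank_mult_invertible_eq_dim_row_iff[OF A invA C invC B])
  note range = col_range_weighted_mult_invertible_iff[OF A invA C invC B, folded M]
  note eB = ginv_weighted_normal_equation[OF B A invA]
    and eM = ginv_weighted_normal_equation[OF Mc Ai(1) invAi, unfolded rank range]
  show ?thesis
    using eB eM by (simp add: eqB eqM eqB[OF moore_penrose_ginv_set[OF B, of "{}"]]
        eqM[OF moore_penrose_ginv_set[OF Mc, of "{}"]])
qed

end
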